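(* Let $(T_n)_{n\ge1}$ be an irreducible folding sequence of combinatorial trees. Then the sequence can be realized as a folding sequence of morphisms of simplicial $\mathbf{R}$–trees in which the groups act by isometries; that is, one can assign to every edge of every $T_n$ a positive real length, constant on $G_n$–orbits, such that whenever an edge of $T_n$ is subdivided to obtain $T_{n+1}$ the lengths of the resulting edges sum to the length of the subdivided edge, and whenever edges are folded together to obtain $T_{n+1}$ they have equal length, equal to the length of the resulting edge (other edges keeping their lengths).
   Context: A folding sequence $(T_n)$ is a sequence of combinatorial trees such that: (a) $T_n$ is a minimal $G_n$–tree for a finitely generated group $G_n$; (b) $T_{n+1}$ is obtained from $T_n$ either by a subdivision of a $G_n$–orbit of edges, or by a fold of Type I, II or III followed by a vertex morphism (with a homomorphism $G_n\to G_{n+1}$). Here a fold of a $G$–tree identifies, $G$–equivariantly, two edges $e_1\ne e_2$ with a common vertex $v$; Type I: the images of $e_1,e_2$ in $G\backslash T$ are distinct edges with distinct other endpoints; Type II: $e_2=ge_1$ for some $g$ in the stabilizer of $v$; Type III: the images of $e_1,e_2$ in the quotient are distinct but their other endpoints are in the same $G$–orbit. A vertex morphism is a morphism of trees whose only effect on the quotient graph of groups is to replace the group $U$ labelling one vertex by a quotient $V$ of $U$ via a surjection that is the identity on the incident edge groups. The sequence is reducible if there exists $n$ such that for every $m\ge n$ there is a proper $G_m$–invariant subset $E_m\subsetneq ET_m$ such that whenever the operation producing $T_{m+1}$ from $T_m$ involves an edge of $E_m$ (subdividing it, or folding it with another edge), all resulting edges lie in $E_{m+1}$; otherwise it is irreducible.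 *)

theory Defs
  imports "HOL-Algebra.Algebra"
begin

text \<open>A graph has vertex set, edge set, and for every edge an origin and a terminus
(each geometric edge carries a fixed orientation; the group acts preserving it,
i.e. without inversions).\<close>

record ('g, 'v, 'e) gtree =
  gt_grp  :: "'g monoid"
  gt_V    :: "'v set"
  gt_E    :: "'e set"
  gt_src  :: "'e \<Rightarrow> 'v"
  gt_tgt  :: "'e \<Rightarrow> 'v"
  gt_actV :: "'g \<Rightarrow> 'v \<Rightarrow> 'v"
  gt_actE :: "'g \<Rightarrow> 'e \<Rightarrow> 'e"

definition adj_rel :: "'e set \<Rightarrow> ('e \<Rightarrow> 'v) \<Rightarrow> ('e \<Rightarrow> 'v) \<Rightarrow> ('v \<times> 'v) set" where
  "adj_rel F s t = {(s e, t e) | e. e \<in> F} \<union> {(t e, s e) | e. e \<in> F}"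

text \<open>A (possibly infinite) tree: nonempty, connected, no loops, and every edge is a bridge
(equivalently: no cycles).\<close>
definition is_tree :: "'v set \<Rightarrow> 'e set \<Rightarrow> ('e \<Rightarrow> 'v) \<Rightarrow> ('e \<Rightarrow> 'v) \<Rightarrow> bool" where
  "is_tree V E s t \<longleftrightarrow> V \<noteq> {}
     \<and> (\<forall>e\<in>E. s e \<in> V \<and> t e \<in> V)
     \<and> (\<forall>u\<in>V. \<forall>w\<in>V. (u, w) \<in> (adj_rel E s t)\<^sup>*)
     \<and> (\<forall>e\<in>E. s e \<noteq> t e \<and> (s e, t e) \<notin> (adj_rel (E - {e}) s t)\<^sup>*)"

definition is_gtree :: "('g, 'v, 'e) gtree \<Rightarrow> bool" where
  "is_gtree T \<longleftrightarrow> (let G = gt_grp T; V = gt_V T; E = gt_E T; aV = gt_actV T; aE = gt_actE T in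
     group G \<and> is_tree V E (gt_src T) (gt_tgt T)
     \<and> (\<forall>g\<in>carrier G. bij_betw (aV g) V V \<and> bij_betw (aE g) E E)
     \<and> (\<forall>x\<in>V. aV \<one>\<^bsub>G\<^esub> x = x) \<and> (\<forall>e\<in>E. aE \<one>\<^bsub>G\<^esub> e = e)
     \<and> (\<forall>g\<in>carrier G. \<forall>h\<in>carrier G. \<forall>x\<in>V. aV (g \<otimes>\<^bsub>G\<^esub> h) x = aV g (aV h x))
     \<and> (\<forall>g\<in>carrier G. \<forall>h\<in>carrier G. \<forall>e\<in>E. aE (g \<otimes>\<^bsub>G\<^esub> h) e = aE g (aE h e))
     \<and> (\<forall>g\<in>carrier G. \<forall>e\<in>E. gt_src T (aE g e) = aV g (gt_src T e)
                                  \<and> gt_tgt T (aE g e) = aV g (gt_tgt T e)))"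

definition fin_gen :: "'g monoid \<Rightarrow> bool" where
  "fin_gen G \<longleftrightarrow> (\<exists>S. finite S \<and> S \<subseteq> carrier G \<and> generate G S = carrier G)"

definition minimal_gtree :: "('g, 'v, 'e) gtree \<Rightarrow> bool" where
  "minimal_gtree T \<longleftrightarrow> (\<forall>W F. W \<subseteq> gt_V T \<and> F \<subseteq> gt_E T \<and> W \<noteq> {}
       \<and> (\<forall>e\<in>F. gt_src T e \<in> W \<and> gt_tgt T e \<in> W)
       \<and> (\<forall>u\<in>W. \<forall>w\<in>W. (u, w) \<in> (adj_rel F (gt_src T) (gt_tgt T))\<^sup>*)
       \<and> (\<forall>g\<in>carrier (gt_grp T). gt_actV T g ` W \<subseteq> W \<and> gt_actE T g ` F \<subseteq> F)
     \<longrightarrow> W = gt_V T \<and> F = gt_E T)"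

definition orbitV :: "('g, 'v, 'e) gtree \<Rightarrow> 'v \<Rightarrow> 'v set" where
  "orbitV T x = (\<lambda>g. gt_actV T g x) ` carrier (gt_grp T)"

definition orbitE :: "('g, 'v, 'e) gtree \<Rightarrow> 'e \<Rightarrow> 'e set" where
  "orbitE T e = (\<lambda>g. gt_actE T g e) ` carrier (gt_grp T)"

definition stabV :: "('g, 'v, 'e) gtree \<Rightarrow> 'v \<Rightarrow> 'g set" where
  "stabV T x = {g \<in> carrier (gt_grp T). gt_actV T g x = x}"

definition stabE :: "('g, 'v, 'e) gtree \<Rightarrow> 'e \<Rightarrow> 'g set" where
  "stabE T e = {g \<in> carrier (gt_grp T). gt_actE T g e = e}"

definition other_end :: "('g, 'v, 'e) gtree \<Rightarrow> 'e \<Rightarrow> 'v \<Rightarrow> 'v" where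
  "other_end T e v = (if gt_src T e = v then gt_tgt T e else gt_src T e)"

section \<open>Folds\<close>

text \<open>The equivariant fold of e1 and e2 at v: the G-invariant equivalence relations on edges
and on vertices generated by g e1 ~ g e2 and g w1 ~ g w2 (wi the other endpoint of ei).\<close>
definition fold_relE :: "('g, 'v, 'e) gtree \<Rightarrow> 'e \<Rightarrow> 'e \<Rightarrow> ('e \<times> 'e) set" where
  "fold_relE T e1 e2 = (Id_on (gt_E T)
      \<union> {(gt_actE T g e1, gt_actE T g e2) | g. g \<in> carrier (gt_grp T)}
      \<union> {(gt_actE T g e2, gt_actE T g e1) | g. g \<in> carrier (gt_grp T)})\<^sup>*"

definition fold_relV :: "('g, 'v, 'e) gtree \<Rightarrow> 'v \<Rightarrow> 'e \<Rightarrow> 'e \<Rightarrow> ('v \<times> 'v) set" where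
  "fold_relV T v e1 e2 = (let w1 = other_end T e1 v; w2 = other_end T e2 v in
     (Id_on (gt_V T)
      \<union> {(gt_actV T g w1, gt_actV T g w2) | g. g \<in> carrier (gt_grp T)}
      \<union> {(gt_actV T g w2, gt_actV T g w1) | g. g \<in> carrier (gt_grp T)})\<^sup>*)"

definition fold_typeI :: "('g, 'v, 'e) gtree \<Rightarrow> 'v \<Rightarrow> 'e \<Rightarrow> 'e \<Rightarrow> bool" where
  "fold_typeI T v e1 e2 \<longleftrightarrow> e2 \<notin> orbitE T e1
      \<and> other_end T e2 v \<notin> orbitV T (other_end T e1 v)"

definition fold_typeII :: "('g, 'v, 'e) gtree \<Rightarrow> 'v \<Rightarrow> 'e \<Rightarrow> 'e \<Rightarrow> bool" where
  "fold_typeII T v e1 e2 \<longleftrightarrow> (\<exists>g\<in>stabV T v. e2 = gt_actE T g e1)"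

definition fold_typeIII :: "('g, 'v, 'e) gtree \<Rightarrow> 'v \<Rightarrow> 'e \<Rightarrow> 'e \<Rightarrow> bool" where
  "fold_typeIII T v e1 e2 \<longleftrightarrow> e2 \<notin> orbitE T e1
      \<and> other_end T e2 v \<in> orbitV T (other_end T e1 v)"

definition is_fold :: "('g, 'v, 'e) gtree \<Rightarrow> 'v \<Rightarrow> 'e \<Rightarrow> 'e \<Rightarrow> bool" where
  "is_fold T v e1 e2 \<longleftrightarrow> v \<in> gt_V T \<and> e1 \<in> gt_E T \<and> e2 \<in> gt_E T \<and> e1 \<noteq> e2
     \<and> v \<in> {gt_src T e1, gt_tgt T e1} \<and> v \<in> {gt_src T e2, gt_tgt T e2}
     \<and> (fold_typeI T v e1 e2 \<or> fold_typeII T v e1 e2 \<or> fold_typeIII T v e1 e2)"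

text \<open>T' is obtained from T by the fold of e1, e2 at v followed by a vertex morphism;
(h, phi, psi) is the composite morphism T \<rightarrow> T' (on group, vertices, edges).
The fold tree is described through representatives: its vertices/edges are the classes of
fold_relV / fold_relE; the stabiliser of a class [x] is {g. (g x, x) in fold_relV}.
The vertex morphism is a surjective equivariant morphism of trees inducing an isomorphism of
quotient graphs, an isomorphism on all edge groups and all vertex groups except those in one
orbit (vertex u0), where it is a surjection.\<close>
definition fold_step :: "('g, 'v, 'e) gtree \<Rightarrow> ('g, 'v, 'e) gtree \<Rightarrow> ('g \<Rightarrow> 'g)
    \<Rightarrow> ('v \<Rightarrow> 'v) \<Rightarrow> ('e \<Rightarrow> 'e) \<Rightarrow> bool" where
  "fold_step T T' h \<phi> \<psi> \<longleftrightarrow> (\<exists>v e1 e2. is_fold T v e1 e2 \<and>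
     (let G = gt_grp T; G' = gt_grp T'; RV = fold_relV T v e1 e2; RE = fold_relE T e1 e2 in
       h \<in> hom G G' \<and> h ` carrier G = carrier G'
     \<and> \<phi> ` gt_V T = gt_V T' \<and> \<psi> ` gt_E T = gt_E T'
     \<and> (\<forall>e\<in>gt_E T. {\<phi> (gt_src T e), \<phi> (gt_tgt T e)} = {gt_src T' (\<psi> e), gt_tgt T' (\<psi> e)})
     \<and> (\<forall>g\<in>carrier G. \<forall>x\<in>gt_V T. \<phi> (gt_actV T g x) = gt_actV T' (h g) (\<phi> x))
     \<and> (\<forall>g\<in>carrier G. \<forall>e\<in>gt_E T. \<psi> (gt_actE T g e) = gt_actE T' (h g) (\<psi> e))
     \<and> (\<forall>(x, y)\<in>RV. \<phi> x = \<phi> y) \<and> (\<forall>(e, f)\<in>RE. \<psi> e = \<psi> f)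
     \<and> (\<forall>x\<in>gt_V T. \<forall>y\<in>gt_V T. (\<exists>g'\<in>carrier G'. gt_actV T' g' (\<phi> x) = \<phi> y)
            \<longrightarrow> (\<exists>g\<in>carrier G. (gt_actV T g x, y) \<in> RV))
     \<and> (\<forall>e\<in>gt_E T. \<forall>f\<in>gt_E T. (\<exists>g'\<in>carrier G'. gt_actE T' g' (\<psi> e) = \<psi> f)
            \<longrightarrow> (\<exists>g\<in>carrier G. (gt_actE T g e, f) \<in> RE))
     \<and> (\<exists>u0\<in>gt_V T. \<forall>x\<in>gt_V T.
            h ` {g \<in> carrier G. (gt_actV T g x, x) \<in> RV} = stabV T' (\<phi> x)
          \<and> ((\<forall>g\<in>carrier G. (gt_actV T g u0, x) \<notin> RV)
               \<longrightarrow> inj_on h {g \<in> carrier G. (gt_actV T g x, x) \<in> RV}))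
     \<and> (\<forall>e\<in>gt_E T.
            h ` {g \<in> carrier G. (gt_actE T g e, e) \<in> RE} = stabE T' (\<psi> e)
          \<and> inj_on h {g \<in> carrier G. (gt_actE T g e, e) \<in> RE})))"

section \<open>Subdivisions\<close>

text \<open>T' is obtained from T by subdividing every edge of the G-orbit of e0 into k \<ge> 2 edges;
the group is unchanged. par maps each edge of T' to the edge of T it comes from.\<close>
definition subdiv_step :: "('g, 'v, 'e) gtree \<Rightarrow> ('g, 'v, 'e) gtree \<Rightarrow> ('e \<Rightarrow> 'e) \<Rightarrow> bool" where
  "subdiv_step T T' par \<longleftrightarrow> gt_grp T' = gt_grp T \<and>
    (\<exists>e0 (k::nat) \<phi> piece mid. e0 \<in> gt_E T \<and> k \<ge> 2 \<and>
     (let G = gt_grp T; Orb = orbitE T e0;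
          pt = (\<lambda>e i. if i = 0 then \<phi> (gt_src T e) else if i = k then \<phi> (gt_tgt T e) else mid e i) in
       inj_on \<phi> (gt_V T) \<and> \<phi> ` gt_V T \<subseteq> gt_V T'
     \<and> (\<forall>e'\<in>gt_E T'. par e' \<in> gt_E T)
     \<and> (\<forall>e\<in>gt_E T - Orb. \<exists>!e'. e' \<in> gt_E T' \<and> par e' = e)
     \<and> (\<forall>e\<in>gt_E T - Orb. \<forall>e'\<in>gt_E T'. par e' = e \<longrightarrow>
           gt_src T' e' = \<phi> (gt_src T e) \<and> gt_tgt T' e' = \<phi> (gt_tgt T e))
     \<and> (\<forall>e\<in>Orb. {e' \<in> gt_E T'. par e' = e} = piece e ` {..<k} \<and> inj_on (piece e) {..<k}
           \<and> (\<forall>i<k. gt_src T' (piece e i) = pt e i \<and> gt_tgt T' (piece e i) = pt e (Suc i)))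
     \<and> gt_V T' = \<phi> ` gt_V T \<union> {mid e i | e i. e \<in> Orb \<and> 0 < i \<and> i < k}
     \<and> inj_on (\<lambda>(e, i). mid e i) (Orb \<times> {1..<k})
     \<and> (\<forall>e\<in>Orb. \<forall>i\<in>{1..<k}. mid e i \<notin> \<phi> ` gt_V T)
     \<and> (\<forall>g\<in>carrier G. \<forall>x\<in>gt_V T. gt_actV T' g (\<phi> x) = \<phi> (gt_actV T g x))
     \<and> (\<forall>g\<in>carrier G. \<forall>e'\<in>gt_E T'. par (gt_actE T' g e') = gt_actE T g (par e'))
     \<and> (\<forall>g\<in>carrier G. \<forall>e\<in>Orb. \<forall>i<k. gt_actE T' g (piece e i) = piece (gt_actE T g e) i)
     \<and> (\<forall>g\<in>carrier G. \<forall>e\<in>Orb. \<forall>i\<in>{1..<k}. gt_actV T' g (mid e i) = mid (gt_actE T g e) i)))"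

section \<open>Folding sequences\<close>

text \<open>A folding sequence together with its morphisms: at step n, either (fs_sub n) T(n+1) is a
subdivision of T(n) with parent map fs_parent n, or T(n+1) is obtained by a fold followed by a
vertex morphism, whose edge map is fs_emap n.\<close>
record ('g, 'v, 'e) fseq =
  fs_tree   :: "nat \<Rightarrow> ('g, 'v, 'e) gtree"
  fs_sub    :: "nat \<Rightarrow> bool"
  fs_emap   :: "nat \<Rightarrow> 'e \<Rightarrow> 'e"
  fs_parent :: "nat \<Rightarrow> 'e \<Rightarrow> 'e"

definition folding_sequence :: "('g, 'v, 'e) fseq \<Rightarrow> bool" where
  "folding_sequence S \<longleftrightarrow> (\<forall>n. is_gtree (fs_tree S n) \<and> fin_gen (gt_grp (fs_tree S n))
     \<and> minimal_gtree (fs_tree S n)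
     \<and> (if fs_sub S n then subdiv_step (fs_tree S n) (fs_tree S (Suc n)) (fs_parent S n)
        else (\<exists>h \<phi>. fold_step (fs_tree S n) (fs_tree S (Suc n)) h \<phi> (fs_emap S n))))"

definition results :: "('g, 'v, 'e) fseq \<Rightarrow> nat \<Rightarrow> 'e \<Rightarrow> 'e set" where
  "results S n e = (if fs_sub S n
     then {e' \<in> gt_E (fs_tree S (Suc n)). fs_parent S n e' = e}
     else {fs_emap S n e})"

definition reducible_fseq :: "('g, 'v, 'e) fseq \<Rightarrow> bool" where
  "reducible_fseq S \<longleftrightarrow> (\<exists>N. \<exists>Es :: nat \<Rightarrow> 'e set. \<forall>m\<ge>N.
      Es m \<subset> gt_E (fs_tree S m) \<and> Es m \<noteq> {}
    \<and> (\<forall>g\<in>carrier (gt_grp (fs_tree S m)). gt_actE (fs_tree S m) g ` Es m \<subseteq> Es m)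
    \<and> (\<forall>e\<in>Es m. results S m e \<subseteq> Es (Suc m)))"

definition irreducible_fseq :: "('g, 'v, 'e) fseq \<Rightarrow> bool" where
  "irreducible_fseq S \<longleftrightarrow> \<not> reducible_fseq S"

end

theory Submission
  imports Defs "HOL-Analysis.Function_Topology"
begin

text \<open>For every \<open>M\<close>, pulling the weight 1 on the edges of \<open>T\<^sub>M\<close> back along the folding
  sequence (a subdivided edge gets the sum of the weights of its pieces, a folded edge the
  weight of its image) gives invariant weights on \<open>T\<^sub>0, \<dots>, T\<^sub>M\<close> satisfying all the required
  identities. Since \<open>T\<^sub>0\<close> is minimal under a finitely generated group, it has finitely many
  edge orbits; normalising the total weight of a set of orbit representatives to 1 puts all
  these weights into \<open>[0, 1]\<close>, and by compactness of the product some weight satisfies the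
  identities at every level. Its zero set is invariant, closed under passing to resulting
  edges, and proper at every level, so by irreducibility it is empty: all lengths are positive.\<close>

section \<open>Edge orbits of minimal trees\<close>

lemma is_gtreeD:
  assumes "is_gtree T"
  shows gtree_group: "group (gt_grp T)"
    and gtree_is_tree: "is_tree (gt_V T) (gt_E T) (gt_src T) (gt_tgt T)"
    and gtree_bij_actV: "g \<in> carrier (gt_grp T) \<Longrightarrow> bij_betw (gt_actV T g) (gt_V T) (gt_V T)"
    and gtree_bij_actE: "g \<in> carrier (gt_grp T) \<Longrightarrow> bij_betw (gt_actE T g) (gt_E T) (gt_E T)"
    and gtree_actV_one: "x \<in> gt_V T \<Longrightarrow> gt_actV T \<one>\<^bsub>gt_grp T\<^esub> x = x"
    and gtree_actE_one: "e \<in> gt_E T \<Longrightarrow> gt_actE T \<one>\<^bsub>gt_grp T\<^esub> e = e"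
    and gtree_actV_mult: "g \<in> carrier (gt_grp T) \<Longrightarrow> h \<in> carrier (gt_grp T) \<Longrightarrow> x \<in> gt_V T
        \<Longrightarrow> gt_actV T (g \<otimes>\<^bsub>gt_grp T\<^esub> h) x = gt_actV T g (gt_actV T h x)"
    and gtree_actE_mult: "g \<in> carrier (gt_grp T) \<Longrightarrow> h \<in> carrier (gt_grp T) \<Longrightarrow> e \<in> gt_E T
        \<Longrightarrow> gt_actE T (g \<otimes>\<^bsub>gt_grp T\<^esub> h) e = gt_actE T g (gt_actE T h e)"
    and gtree_src_actE: "g \<in> carrier (gt_grp T) \<Longrightarrow> e \<in> gt_E T \<Longrightarrow>
        gt_src T (gt_actE T g e) = gt_actV T g (gt_src T e)"
    and gtree_tgt_actE: "g \<in> carrier (gt_grp T) \<Longrightarrow> e \<in> gt_E T \<Longrightarrow>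
        gt_tgt T (gt_actE T g e) = gt_actV T g (gt_tgt T e)"
  using assms unfolding is_gtree_def Let_def by auto

lemma gtree_actV_closed:
  "is_gtree T \<Longrightarrow> g \<in> carrier (gt_grp T) \<Longrightarrow> x \<in> gt_V T \<Longrightarrow> gt_actV T g x \<in> gt_V T"
  by (rule bij_betwE[OF gtree_bij_actV, rule_format])

lemma gtree_actE_closed:
  "is_gtree T \<Longrightarrow> g \<in> carrier (gt_grp T) \<Longrightarrow> e \<in> gt_E T \<Longrightarrow> gt_actE T g e \<in> gt_E T"
  by (rule bij_betwE[OF gtree_bij_actE, rule_format])

lemma gtree_orbitE_subset:
  assumes "is_gtree T" and "e \<in> gt_E T"
  shows "orbitE T e \<subseteq> gt_E T"
  using gtree_actE_closed[OF assms(1) _ assms(2)] unfolding orbitE_def by blast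

lemma gtree_orbitE_act:
  assumes T: "is_gtree T" and g: "g \<in> carrier (gt_grp T)" and e: "e \<in> gt_E T"
  shows "gt_actE T g ` orbitE T e \<subseteq> orbitE T e"
proof -
  interpret group "gt_grp T" by (rule gtree_group[OF T])
  show ?thesis
    unfolding orbitE_def
  proof (rule image_subsetI, elim imageE)
    fix y h assume "y = gt_actE T h e" and h: "h \<in> carrier (gt_grp T)"
    then have "gt_actE T g y = gt_actE T (g \<otimes>\<^bsub>gt_grp T\<^esub> h) e"
      using gtree_actE_mult[OF T g h e] by simp
    then show "gt_actE T g y \<in> (\<lambda>g. gt_actE T g e) ` carrier (gt_grp T)"
      using g h by blast
  qed
qed

lemma gtree_orbits_subset:
  assumes T: "is_gtree T" and R: "R \<subseteq> gt_E T"
  shows "(\<Union>r\<in>R. orbitE T r) \<subseteq> gt_E T"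
  using R by (intro UN_least gtree_orbitE_subset[OF T]) blast

lemma gtree_orbits_act:
  assumes T: "is_gtree T" and g: "g \<in> carrier (gt_grp T)" and R: "R \<subseteq> gt_E T"
  shows "gt_actE T g ` (\<Union>r\<in>R. orbitE T r) \<subseteq> (\<Union>r\<in>R. orbitE T r)"
  unfolding image_UN using R by (intro UN_mono gtree_orbitE_act[OF T g]) blast+

lemma gtree_subset_orbits:
  assumes T: "is_gtree T" and R: "R \<subseteq> gt_E T"
  shows "R \<subseteq> (\<Union>r\<in>R. orbitE T r)"
proof
  fix r assume r: "r \<in> R"
  then have "r = gt_actE T \<one>\<^bsub>gt_grp T\<^esub> r" using R gtree_actE_one[OF T] by auto
  moreover have "\<one>\<^bsub>gt_grp T\<^esub> \<in> carrier (gt_grp T)"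
    by (rule monoid.one_closed[OF group.is_monoid[OF gtree_group[OF T]]])
  ultimately show "r \<in> (\<Union>r\<in>R. orbitE T r)" using r unfolding orbitE_def by blast
qed

lemma adj_rel_mono: "A \<subseteq> B \<Longrightarrow> adj_rel A s t \<subseteq> adj_rel B s t"
  unfolding adj_rel_def by blast

lemma adj_rel_edge: "e \<in> A \<Longrightarrow> (s e, t e) \<in> adj_rel A s t \<and> (t e, s e) \<in> adj_rel A s t"
  unfolding adj_rel_def by blast

lemma adj_rel_rtrancl_sym: "(x, y) \<in> (adj_rel A s t)\<^sup>* \<Longrightarrow> (y, x) \<in> (adj_rel A s t)\<^sup>*"
proof -
  have "sym (adj_rel A s t)"
    unfolding adj_rel_def sym_def by blast
  then show "(x, y) \<in> (adj_rel A s t)\<^sup>* \<Longrightarrow> (y, x) \<in> (adj_rel A s t)\<^sup>*"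
    by (metis sym_rtrancl symD)
qed

lemma is_tree_rtrancl_adj_rel_vertex:
  assumes tree: "is_tree V E s t" and F: "F \<subseteq> E" and x: "x \<in> V"
    and xw: "(x, w) \<in> (adj_rel F s t)\<^sup>*"
  shows "w \<in> V"
  using xw
proof (induction rule: rtrancl_induct)
  case (step y z)
  then obtain e where "e \<in> F" "z = s e \<or> z = t e" unfolding adj_rel_def by blast
  then show ?case using tree F unfolding is_tree_def by blast
qed (rule x)

lemma adj_rel_rtrancl_finite_support:
  assumes "(u, w) \<in> (adj_rel E s t)\<^sup>*"
  shows "\<exists>P. finite P \<and> P \<subseteq> E \<and> (u, w) \<in> (adj_rel P s t)\<^sup>*
           \<and> (\<forall>e\<in>P. (u, s e) \<in> (adj_rel P s t)\<^sup>*)"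
  using assms
proof (induction rule: rtrancl_induct)
  case base
  show ?case by blast
next
  case (step y z)
  then obtain P where P: "finite P" "P \<subseteq> E" "(u, y) \<in> (adj_rel P s t)\<^sup>*"
    "\<forall>e\<in>P. (u, s e) \<in> (adj_rel P s t)\<^sup>*" by blast
  from step.hyps(2) obtain e where e: "e \<in> E" "(y = s e \<and> z = t e) \<or> (y = t e \<and> z = s e)"
    unfolding adj_rel_def by blast
  let ?Q = "insert e P"
  have mono: "(adj_rel P s t)\<^sup>* \<subseteq> (adj_rel ?Q s t)\<^sup>*"
    by (intro rtrancl_mono adj_rel_mono) blast
  have "(y, z) \<in> adj_rel ?Q s t"
    using e(2) adj_rel_edge[of e ?Q s t] by auto
  then have uz: "(u, z) \<in> (adj_rel ?Q s t)\<^sup>*"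
    using P(3) mono by (meson rtrancl_into_rtrancl subsetD)
  have "(u, s e) \<in> (adj_rel ?Q s t)\<^sup>*"
    using e(2) uz P(3) mono by blast
  then show ?case
    using P mono e(1) uz by (intro exI[of _ ?Q]) auto
qed

lemma gtree_adj_rel_rtrancl_act:
  assumes T: "is_gtree T" and g: "g \<in> carrier (gt_grp T)" and A: "A \<subseteq> gt_E T"
    and xy: "(x, y) \<in> (adj_rel A (gt_src T) (gt_tgt T))\<^sup>*"
  shows "(gt_actV T g x, gt_actV T g y) \<in> (adj_rel (gt_actE T g ` A) (gt_src T) (gt_tgt T))\<^sup>*"
  using xy
proof (induction rule: rtrancl_induct)
  case base
  show ?case by simp
next
  case (step y z)
  from step.hyps(2) obtain e where e: "e \<in> A"
    "(y = gt_src T e \<and> z = gt_tgt T e) \<or> (y = gt_tgt T e \<and> z = gt_src T e)"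
    unfolding adj_rel_def by blast
  have eE: "e \<in> gt_E T" using e(1) A by blast
  have "gt_actE T g e \<in> gt_actE T g ` A" using e(1) by blast
  note edge = adj_rel_edge[OF this, of "gt_src T" "gt_tgt T",
      unfolded gtree_src_actE[OF T g eE] gtree_tgt_actE[OF T g eE]]
  have "(gt_actV T g y, gt_actV T g z) \<in> adj_rel (gt_actE T g ` A) (gt_src T) (gt_tgt T)"
    using e(2) edge by auto
  with step.IH show ?case
    by (rule rtrancl_into_rtrancl)
qed

lemma gtree_invariant_rtrancl_act:
  assumes T: "is_gtree T" and g: "g \<in> carrier (gt_grp T)" and F: "F \<subseteq> gt_E T"
    and F_inv: "gt_actE T g ` F \<subseteq> F"
    and xy: "(x, y) \<in> (adj_rel F (gt_src T) (gt_tgt T))\<^sup>*"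
  shows "(gt_actV T g x, gt_actV T g y) \<in> (adj_rel F (gt_src T) (gt_tgt T))\<^sup>*"
  using gtree_adj_rel_rtrancl_act[OF T g F xy] rtrancl_mono[OF adj_rel_mono[OF F_inv]] by blast

lemma gtree_rtrancl_generate:
  assumes T: "is_gtree T" and x: "x \<in> gt_V T" and F: "F \<subseteq> gt_E T"
    and F_inv: "\<And>g. g \<in> carrier (gt_grp T) \<Longrightarrow> gt_actE T g ` F \<subseteq> F"
    and gens: "\<And>s. s \<in> Sg \<Longrightarrow> (x, gt_actV T s x) \<in> (adj_rel F (gt_src T) (gt_tgt T))\<^sup>*"
    and Sg: "Sg \<subseteq> carrier (gt_grp T)" and g: "g \<in> generate (gt_grp T) Sg"
  shows "(x, gt_actV T g x) \<in> (adj_rel F (gt_src T) (gt_tgt T))\<^sup>*"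
proof -
  interpret group "gt_grp T" by (rule gtree_group[OF T])
  note act = gtree_invariant_rtrancl_act[OF T _ F F_inv]
  show ?thesis
    using g
  proof (induction rule: generate.induct)
    case one
    show ?case using gtree_actV_one[OF T x] by simp
  next
    case (incl s)
    then show ?case by (rule gens)
  next
    case (inv s)
    have s: "s \<in> carrier (gt_grp T)" using inv Sg by blast
    let ?s' = "inv\<^bsub>gt_grp T\<^esub> s"
    have "(gt_actV T ?s' x, gt_actV T ?s' (gt_actV T s x)) \<in> (adj_rel F (gt_src T) (gt_tgt T))\<^sup>*"
      using s by (intro act gens[OF inv]) simp_all
    moreover have "gt_actV T ?s' (gt_actV T s x) = x"
      using gtree_actV_mult[OF T _ s x, symmetric] gtree_actV_one[OF T x] s by simp
    ultimately show ?case by (metis adj_rel_rtrancl_sym)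
  next
    case (eng h1 h2)
    have h: "h1 \<in> carrier (gt_grp T)" "h2 \<in> carrier (gt_grp T)"
      using eng.hyps generate_in_carrier[OF Sg] by blast+
    have "(gt_actV T h1 x, gt_actV T h1 (gt_actV T h2 x)) \<in> (adj_rel F (gt_src T) (gt_tgt T))\<^sup>*"
      by (rule act[OF h(1) h(1) eng.IH(2)])
    with eng.IH(1) show ?case
      using gtree_actV_mult[OF T h x] by (metis rtrancl_trans)
  qed
qed

text \<open>The component of \<open>x\<close> in the orbit span of \<open>R\<close> is an invariant subtree containing that span.\<close>
lemma minimal_gtree_orbits_eq:
  assumes T: "is_gtree T" and mn: "minimal_gtree T" and x: "x \<in> gt_V T" and R: "R \<subseteq> gt_E T"
    and moves: "\<And>g. g \<in> carrier (gt_grp T) \<Longrightarrow>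
        (x, gt_actV T g x) \<in> (adj_rel (\<Union>r\<in>R. orbitE T r) (gt_src T) (gt_tgt T))\<^sup>*"
    and reaches: "\<And>r. r \<in> R \<Longrightarrow>
        (x, gt_src T r) \<in> (adj_rel (\<Union>r\<in>R. orbitE T r) (gt_src T) (gt_tgt T))\<^sup>*"
  shows "gt_E T = (\<Union>r\<in>R. orbitE T r)"
proof -
  define F where "F = (\<Union>r\<in>R. orbitE T r)"
  let ?adj = "adj_rel F (gt_src T) (gt_tgt T)"
  define W where "W = {w. (x, w) \<in> ?adj\<^sup>*}"
  note moves = moves[folded F_def] and reaches = reaches[folded F_def]
  have FE: "F \<subseteq> gt_E T" unfolding F_def by (rule gtree_orbits_subset[OF T R])
  have F_inv: "gt_actE T g ` F \<subseteq> F" if "g \<in> carrier (gt_grp T)" for g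
    unfolding F_def by (rule gtree_orbits_act[OF T that R])
  have W_inv: "gt_actV T g w \<in> W" if g: "g \<in> carrier (gt_grp T)" and w: "w \<in> W" for g w
  proof -
    have "(gt_actV T g x, gt_actV T g w) \<in> ?adj\<^sup>*"
      using w unfolding W_def by (intro gtree_invariant_rtrancl_act[OF T g FE F_inv[OF g]]) simp
    with moves[OF g] show ?thesis unfolding W_def by simp
  qed
  have R_ends: "gt_src T r \<in> W \<and> gt_tgt T r \<in> W" if r: "r \<in> R" for r
  proof -
    have "r \<in> F" using gtree_subset_orbits[OF T R] r unfolding F_def by blast
    then have "(gt_src T r, gt_tgt T r) \<in> ?adj" by (rule conjunct1[OF adj_rel_edge])
    with reaches[OF r] have "(x, gt_tgt T r) \<in> ?adj\<^sup>*" by (rule rtrancl_into_rtrancl)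
    with reaches[OF r] show ?thesis unfolding W_def by simp
  qed
  have F_ends: "gt_src T e \<in> W \<and> gt_tgt T e \<in> W" if e: "e \<in> F" for e
  proof -
    obtain g r where g: "g \<in> carrier (gt_grp T)" and r: "r \<in> R" and e: "e = gt_actE T g r"
      using e unfolding F_def orbitE_def by blast
    have "r \<in> gt_E T" using r R by blast
    then show ?thesis
      using R_ends[OF r] W_inv[OF g] by (simp add: e gtree_src_actE[OF T g] gtree_tgt_actE[OF T g])
  qed
  have "W \<subseteq> gt_V T"
    unfolding W_def using is_tree_rtrancl_adj_rel_vertex[OF gtree_is_tree[OF T] FE x] by blast
  moreover have "W \<noteq> {}" unfolding W_def by blast
  moreover have "\<forall>u\<in>W. \<forall>w\<in>W. (u, w) \<in> ?adj\<^sup>*"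
    unfolding W_def by (meson adj_rel_rtrancl_sym mem_Collect_eq rtrancl_trans)
  moreover have "\<forall>g\<in>carrier (gt_grp T). gt_actV T g ` W \<subseteq> W \<and> gt_actE T g ` F \<subseteq> F"
    using W_inv F_inv by blast
  ultimately have "W = gt_V T \<and> F = gt_E T"
    using FE F_ends by (intro mn[unfolded minimal_gtree_def, rule_format]) blast
  then have "F = gt_E T" ..
  then show ?thesis unfolding F_def by (rule sym)
qed

lemma gtree_finite_walks:
  assumes T: "is_gtree T" and x: "x \<in> gt_V T" and Sg: "finite Sg" "Sg \<subseteq> carrier (gt_grp T)"
  obtains R where "finite R" "R \<subseteq> gt_E T"
    and "\<And>s. s \<in> Sg \<Longrightarrow> (x, gt_actV T s x) \<in> (adj_rel R (gt_src T) (gt_tgt T))\<^sup>*"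
    and "\<And>r. r \<in> R \<Longrightarrow> (x, gt_src T r) \<in> (adj_rel R (gt_src T) (gt_tgt T))\<^sup>*"
proof -
  let ?adj = "\<lambda>F. adj_rel F (gt_src T) (gt_tgt T)"
  have tree: "is_tree (gt_V T) (gt_E T) (gt_src T) (gt_tgt T)" by (rule gtree_is_tree[OF T])
  have "\<forall>s\<in>Sg. \<exists>P. finite P \<and> P \<subseteq> gt_E T \<and> (x, gt_actV T s x) \<in> (?adj P)\<^sup>*
          \<and> (\<forall>e\<in>P. (x, gt_src T e) \<in> (?adj P)\<^sup>*)"
  proof
    fix s assume "s \<in> Sg"
    then have "s \<in> carrier (gt_grp T)" using Sg(2) by blast
    then have "gt_actV T s x \<in> gt_V T" by (rule gtree_actV_closed[OF T _ x])
    then have "(x, gt_actV T s x) \<in> (?adj (gt_E T))\<^sup>*" using tree x unfolding is_tree_def by blast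
    then show "\<exists>P. finite P \<and> P \<subseteq> gt_E T \<and> (x, gt_actV T s x) \<in> (?adj P)\<^sup>*
          \<and> (\<forall>e\<in>P. (x, gt_src T e) \<in> (?adj P)\<^sup>*)"
      by (rule adj_rel_rtrancl_finite_support)
  qed
  then obtain P where P: "\<And>s. s \<in> Sg \<Longrightarrow> finite (P s) \<and> P s \<subseteq> gt_E T
      \<and> (x, gt_actV T s x) \<in> (?adj (P s))\<^sup>* \<and> (\<forall>e\<in>P s. (x, gt_src T e) \<in> (?adj (P s))\<^sup>*)"
    by metis
  define R where "R = (\<Union>s\<in>Sg. P s)"
  have PR: "(?adj (P s))\<^sup>* \<subseteq> (?adj R)\<^sup>*" if "s \<in> Sg" for s
    using that unfolding R_def by (intro rtrancl_mono adj_rel_mono) blast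
  show thesis
  proof (rule that)
    show "finite R" "R \<subseteq> gt_E T" using P Sg(1) unfolding R_def by auto
    show "(x, gt_actV T s x) \<in> (?adj R)\<^sup>*" if "s \<in> Sg" for s
      using P[OF that] PR[OF that] by blast
    show "(x, gt_src T r) \<in> (?adj R)\<^sup>*" if r: "r \<in> R" for r
    proof -
      obtain s where s: "s \<in> Sg" "r \<in> P s" using r unfolding R_def by blast
      then have "(x, gt_src T r) \<in> (?adj (P s))\<^sup>*" using P[OF s(1)] by blast
      then show ?thesis using PR[OF s(1)] by blast
    qed
  qed
qed

text \<open>A finite generating set moves a base vertex along finitely many edges; by minimality
  the orbits of these edges are all the edges.\<close>
lemma minimal_fin_gen_finite_edge_orbits:
  assumes T: "is_gtree T" and fg: "fin_gen (gt_grp T)" and mn: "minimal_gtree T"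
  obtains R where "finite R" "R \<subseteq> gt_E T" "gt_E T = (\<Union>r\<in>R. orbitE T r)"
proof -
  let ?adj = "\<lambda>F. adj_rel F (gt_src T) (gt_tgt T)"
  obtain x where x: "x \<in> gt_V T" using gtree_is_tree[OF T] unfolding is_tree_def by blast
  obtain Sg where Sg: "finite Sg" "Sg \<subseteq> carrier (gt_grp T)" "generate (gt_grp T) Sg = carrier (gt_grp T)"
    using fg unfolding fin_gen_def by blast
  obtain R where R: "finite R" "R \<subseteq> gt_E T"
    and gens_R: "\<And>s. s \<in> Sg \<Longrightarrow> (x, gt_actV T s x) \<in> (?adj R)\<^sup>*"
    and reaches_R: "\<And>r. r \<in> R \<Longrightarrow> (x, gt_src T r) \<in> (?adj R)\<^sup>*"
    using gtree_finite_walks[OF T x Sg(1,2)] by blast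
  let ?F = "\<Union>r\<in>R. orbitE T r"
  have RF: "(?adj R)\<^sup>* \<subseteq> (?adj ?F)\<^sup>*"
    by (intro rtrancl_mono adj_rel_mono gtree_subset_orbits[OF T R(2)])
  have gens: "(x, gt_actV T s x) \<in> (?adj ?F)\<^sup>*" if "s \<in> Sg" for s
    using gens_R[OF that] RF by blast
  have moves: "(x, gt_actV T g x) \<in> (?adj ?F)\<^sup>*" if g: "g \<in> carrier (gt_grp T)" for g
  proof -
    have "g \<in> generate (gt_grp T) Sg" using Sg(3) g by simp
    with T x gtree_orbits_subset[OF T R(2)] gtree_orbits_act[OF T _ R(2)] gens Sg(2) show ?thesis
      by (rule gtree_rtrancl_generate)
  qed
  have reaches: "(x, gt_src T r) \<in> (?adj ?F)\<^sup>*" if "r \<in> R" for r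
    using reaches_R[OF that] RF by blast
  have "gt_E T = ?F" by (rule minimal_gtree_orbits_eq[OF T mn x R(2) moves reaches])
  with R show thesis by (rule that)
qed

section \<open>Steps of a folding sequence\<close>

lemma subdiv_stepE:
  assumes "subdiv_step T T' par"
  obtains e0 and k :: nat and piece where
    "e0 \<in> gt_E T" and "k \<ge> 2"
    and "\<forall>e'\<in>gt_E T'. par e' \<in> gt_E T"
    and "\<forall>e\<in>gt_E T - orbitE T e0. \<exists>!e'. e' \<in> gt_E T' \<and> par e' = e"
    and "\<forall>e\<in>orbitE T e0. {e' \<in> gt_E T'. par e' = e} = piece e ` {..<k}"
    and "\<forall>g\<in>carrier (gt_grp T). \<forall>e'\<in>gt_E T'. par (gt_actE T' g e') = gt_actE T g (par e')"
proof -
  have "\<exists>e0 (k::nat) piece. e0 \<in> gt_E T \<and> k \<ge> 2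
      \<and> (\<forall>e'\<in>gt_E T'. par e' \<in> gt_E T)
      \<and> (\<forall>e\<in>gt_E T - orbitE T e0. \<exists>!e'. e' \<in> gt_E T' \<and> par e' = e)
      \<and> (\<forall>e\<in>orbitE T e0. {e' \<in> gt_E T'. par e' = e} = piece e ` {..<k})
      \<and> (\<forall>g\<in>carrier (gt_grp T). \<forall>e'\<in>gt_E T'. par (gt_actE T' g e') = gt_actE T g (par e'))"
    using assms unfolding subdiv_step_def Let_def ball_conj_distrib
    by (elim conjE exE) (intro exI conjI; assumption)
  then show thesis by (elim exE conjE) (rule that; assumption)
qed

lemma subdiv_stepD:
  assumes "subdiv_step T T' par"
  shows subdiv_step_grp: "gt_grp T' = gt_grp T"
    and subdiv_step_parent: "e' \<in> gt_E T' \<Longrightarrow> par e' \<in> gt_E T"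
    and subdiv_step_parent_act: "g \<in> carrier (gt_grp T) \<Longrightarrow> e' \<in> gt_E T' \<Longrightarrow>
        par (gt_actE T' g e') = gt_actE T g (par e')"
    and subdiv_step_edges_nonempty: "gt_E T \<noteq> {}"
proof -
  show "gt_grp T' = gt_grp T" using assms unfolding subdiv_step_def by simp
  obtain e0 where "e0 \<in> gt_E T" and "\<forall>e'\<in>gt_E T'. par e' \<in> gt_E T"
    and "\<forall>g\<in>carrier (gt_grp T). \<forall>e'\<in>gt_E T'. par (gt_actE T' g e') = gt_actE T g (par e')"
    using assms by (rule subdiv_stepE)
  then show "gt_E T \<noteq> {}" "e' \<in> gt_E T' \<Longrightarrow> par e' \<in> gt_E T"
    "g \<in> carrier (gt_grp T) \<Longrightarrow> e' \<in> gt_E T' \<Longrightarrow> par (gt_actE T' g e') = gt_actE T g (par e')"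
    by blast+
qed

lemma subdiv_step_fibre_finite:
  assumes "subdiv_step T T' par"
  shows "finite {e' \<in> gt_E T'. par e' = e}"
proof -
  obtain e0 and k :: nat and piece where
    par: "\<forall>e'\<in>gt_E T'. par e' \<in> gt_E T"
    and single: "\<forall>e\<in>gt_E T - orbitE T e0. \<exists>!e'. e' \<in> gt_E T' \<and> par e' = e"
    and pieces: "\<forall>e\<in>orbitE T e0. {e' \<in> gt_E T'. par e' = e} = piece e ` {..<k}"
    using assms by (rule subdiv_stepE)
  consider "e \<in> gt_E T - orbitE T e0" | "e \<in> orbitE T e0" | "e \<notin> gt_E T" by blast
  then show ?thesis
  proof cases
    case 1
    with single have "\<exists>!e'. e' \<in> gt_E T' \<and> par e' = e" by blast
    then obtain e' where "{e' \<in> gt_E T'. par e' = e} = {e'}" by (elim ex1E) blast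
    then show ?thesis by simp
  next
    case 2
    then show ?thesis using pieces by simp
  next
    case 3
    then have "{e' \<in> gt_E T'. par e' = e} = {}" using par by blast
    then show ?thesis by (metis finite.emptyI)
  qed
qed

lemma subdiv_step_fibre_nonempty:
  assumes "subdiv_step T T' par" and e: "e \<in> gt_E T"
  shows "{e' \<in> gt_E T'. par e' = e} \<noteq> {}"
proof -
  obtain e0 and k :: nat and piece where k: "k \<ge> 2"
    and single: "\<forall>e\<in>gt_E T - orbitE T e0. \<exists>!e'. e' \<in> gt_E T' \<and> par e' = e"
    and pieces: "\<forall>e\<in>orbitE T e0. {e' \<in> gt_E T'. par e' = e} = piece e ` {..<k}"
    using assms(1) by (rule subdiv_stepE)
  show ?thesis
  proof (cases "e \<in> orbitE T e0")
    case True
    then have "{e' \<in> gt_E T'. par e' = e} = piece e ` {..<k}" using pieces by blast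
    moreover have "piece e ` {..<k} \<noteq> {}" using k by (simp add: lessThan_empty_iff)
    ultimately show ?thesis by metis
  next
    case False
    with single e have "\<exists>!e'. e' \<in> gt_E T' \<and> par e' = e" by blast
    then show ?thesis by (auto dest: ex1_implies_ex)
  qed
qed

lemma subdiv_step_fibre_act:
  assumes sd: "subdiv_step T T' par" and T: "is_gtree T" and T': "is_gtree T'"
    and g: "g \<in> carrier (gt_grp T)" and e: "e \<in> gt_E T"
  shows "{f \<in> gt_E T'. par f = gt_actE T g e} = gt_actE T' g ` {f \<in> gt_E T'. par f = e}"
proof -
  have g': "g \<in> carrier (gt_grp T')" using g subdiv_step_grp[OF sd] by simp
  have bij: "bij_betw (gt_actE T' g) (gt_E T') (gt_E T')" by (rule gtree_bij_actE[OF T' g'])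
  have inj: "inj_on (gt_actE T g) (gt_E T)"
    using gtree_bij_actE[OF T g] by (rule bij_betw_imp_inj_on)
  note parent = subdiv_step_parent[OF sd] and parent_act = subdiv_step_parent_act[OF sd g]
  show ?thesis
  proof (intro equalityI subsetI)
    fix f assume "f \<in> {f \<in> gt_E T'. par f = gt_actE T g e}"
    then have f: "f \<in> gt_E T'" "par f = gt_actE T g e" by blast+
    then obtain f0 where f0: "f0 \<in> gt_E T'" "f = gt_actE T' g f0"
      using bij unfolding bij_betw_def by blast
    have "gt_actE T g (par f0) = gt_actE T g e" using f f0 parent_act by simp
    then have "par f0 = e" using inj parent[OF f0(1)] e by (meson inj_onD)
    then show "f \<in> gt_actE T' g ` {f \<in> gt_E T'. par f = e}" using f0 by blast
  next
    fix f assume "f \<in> gt_actE T' g ` {f \<in> gt_E T'. par f = e}"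
    then show "f \<in> {f \<in> gt_E T'. par f = gt_actE T g e}"
      using bij parent_act unfolding bij_betw_def by auto
  qed
qed

lemma fold_stepD:
  assumes "fold_step T T' h \<phi> \<psi>"
  shows fold_step_hom_closed: "g \<in> carrier (gt_grp T) \<Longrightarrow> h g \<in> carrier (gt_grp T')"
    and fold_step_edges_onto: "\<psi> ` gt_E T = gt_E T'"
    and fold_step_edge_act: "g \<in> carrier (gt_grp T) \<Longrightarrow> e \<in> gt_E T \<Longrightarrow>
        \<psi> (gt_actE T g e) = gt_actE T' (h g) (\<psi> e)"
    and fold_step_edges_nonempty: "gt_E T \<noteq> {}"
proof -
  have "h \<in> hom (gt_grp T) (gt_grp T') \<and> \<psi> ` gt_E T = gt_E T'
      \<and> (\<forall>g\<in>carrier (gt_grp T). \<forall>e\<in>gt_E T. \<psi> (gt_actE T g e) = gt_actE T' (h g) (\<psi> e))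
      \<and> (\<exists>e. e \<in> gt_E T)"
    using assms unfolding fold_step_def is_fold_def Let_def
    by (elim conjE exE) (intro exI conjI; assumption)
  then have hom: "h \<in> hom (gt_grp T) (gt_grp T')"
    and onto: "\<psi> ` gt_E T = gt_E T'"
    and act: "\<forall>g\<in>carrier (gt_grp T). \<forall>e\<in>gt_E T. \<psi> (gt_actE T g e) = gt_actE T' (h g) (\<psi> e)"
    and nonempty: "gt_E T \<noteq> {}"
    by blast+
  show "g \<in> carrier (gt_grp T) \<Longrightarrow> h g \<in> carrier (gt_grp T')"
    using hom unfolding hom_def by blast
  show "\<psi> ` gt_E T = gt_E T'" "gt_E T \<noteq> {}" by (fact onto nonempty)+
  show "g \<in> carrier (gt_grp T) \<Longrightarrow> e \<in> gt_E T \<Longrightarrow> \<psi> (gt_actE T g e) = gt_actE T' (h g) (\<psi> e)"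
    using act by blast
qed

lemma folding_sequenceD:
  assumes "folding_sequence S"
  shows folding_sequence_gtree: "is_gtree (fs_tree S n)"
    and folding_sequence_fin_gen: "fin_gen (gt_grp (fs_tree S n))"
    and folding_sequence_minimal: "minimal_gtree (fs_tree S n)"
  using assms unfolding folding_sequence_def by simp_all

lemma folding_sequence_step_cases:
  assumes "folding_sequence S"
  obtains (subdiv) "subdiv_step (fs_tree S n) (fs_tree S (Suc n)) (fs_parent S n)"
      "\<And>e. results S n e = {e' \<in> gt_E (fs_tree S (Suc n)). fs_parent S n e' = e}"
    | (fold) h \<phi> where "fold_step (fs_tree S n) (fs_tree S (Suc n)) h \<phi> (fs_emap S n)"
      "\<And>e. results S n e = {fs_emap S n e}"
proof -
  have step: "if fs_sub S n then subdiv_step (fs_tree S n) (fs_tree S (Suc n)) (fs_parent S n)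
      else \<exists>h \<phi>. fold_step (fs_tree S n) (fs_tree S (Suc n)) h \<phi> (fs_emap S n)"
    using assms unfolding folding_sequence_def by blast
  show thesis
  proof (cases "fs_sub S n")
    case True
    then show ?thesis using step subdiv unfolding results_def by simp
  next
    case False
    then obtain h \<phi> where "fold_step (fs_tree S n) (fs_tree S (Suc n)) h \<phi> (fs_emap S n)"
      using step by auto
    then show ?thesis using False fold unfolding results_def by simp
  qed
qed

lemma folding_sequence_edges_nonempty:
  assumes "folding_sequence S"
  shows "gt_E (fs_tree S n) \<noteq> {}"
  using assms
  by (cases rule: folding_sequence_step_cases[where n = n])
    (blast dest: subdiv_step_edges_nonempty fold_step_edges_nonempty)+

lemma results_finite_nonempty_subset:
  assumes FS: "folding_sequence S" and e: "e \<in> gt_E (fs_tree S n)"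
  shows "finite (results S n e) \<and> results S n e \<noteq> {} \<and> results S n e \<subseteq> gt_E (fs_tree S (Suc n))"
  using FS
proof (cases rule: folding_sequence_step_cases[where n = n])
  case subdiv
  then show ?thesis
    using subdiv_step_fibre_finite[OF subdiv(1)] subdiv_step_fibre_nonempty[OF subdiv(1) e] by auto
next
  case (fold h \<phi>)
  then show ?thesis using fold_step_edges_onto[OF fold(1)] e by auto
qed

lemma results_cover:
  assumes FS: "folding_sequence S" and f: "f \<in> gt_E (fs_tree S (Suc n))"
  shows "\<exists>e\<in>gt_E (fs_tree S n). f \<in> results S n e"
  using FS
proof (cases rule: folding_sequence_step_cases[where n = n])
  case subdiv
  then show ?thesis using subdiv_step_parent[OF subdiv(1) f] f by auto
next
  case (fold h \<phi>)
  then show ?thesis using fold_step_edges_onto[OF fold(1)] f by auto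
qed

lemma results_act:
  assumes FS: "folding_sequence S" and g: "g \<in> carrier (gt_grp (fs_tree S n))"
    and e: "e \<in> gt_E (fs_tree S n)"
  shows "\<exists>g'\<in>carrier (gt_grp (fs_tree S (Suc n))).
           results S n (gt_actE (fs_tree S n) g e) = gt_actE (fs_tree S (Suc n)) g' ` results S n e"
  using FS
proof (cases rule: folding_sequence_step_cases[where n = n])
  case subdiv
  have "g \<in> carrier (gt_grp (fs_tree S (Suc n)))" using g subdiv_step_grp[OF subdiv(1)] by simp
  moreover note subdiv_step_fibre_act[OF subdiv(1) folding_sequence_gtree[OF FS]
      folding_sequence_gtree[OF FS] g e]
  ultimately show ?thesis using subdiv(2) by auto
next
  case (fold h \<phi>)
  then show ?thesis
    using fold_step_hom_closed[OF fold(1) g] fold_step_edge_act[OF fold(1) g e] by auto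
qed

section \<open>Consistent weights on an equivariant refinement\<close>

lemma compact_funcset_UNIV:
  fixes S :: "'b::topological_space set"
  assumes "compact S"
  shows "compact (UNIV \<rightarrow> S :: ('a \<Rightarrow> 'b) set)"
proof -
  have "compactin (product_topology (\<lambda>_. euclidean) UNIV) (PiE (UNIV :: 'a set) (\<lambda>_. S))"
    using assms by (simp add: compactin_PiE)
  then show ?thesis
    by (simp add: euclidean_product_topology PiE_UNIV_domain)
qed

text \<open>Level \<open>n\<close> carries the edges \<open>E n\<close> of the \<open>n\<close>-th tree with the action of its group;
  \<open>res n e\<close> are the edges of the next tree resulting from \<open>e\<close>, and \<open>R\<close> is a finite set of
  representatives of the edge orbits at level 0.\<close>
locale equivariant_refinement =
  fixes E :: "nat \<Rightarrow> 'e set" and Grp :: "nat \<Rightarrow> 'g set" and act :: "nat \<Rightarrow> 'g \<Rightarrow> 'e \<Rightarrow> 'e"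
    and res :: "nat \<Rightarrow> 'e \<Rightarrow> 'e set" and R :: "'e set"
  assumes res_finite: "e \<in> E n \<Longrightarrow> finite (res n e)"
    and res_nonempty: "e \<in> E n \<Longrightarrow> res n e \<noteq> {}"
    and res_subset: "e \<in> E n \<Longrightarrow> res n e \<subseteq> E (Suc n)"
    and res_cover: "f \<in> E (Suc n) \<Longrightarrow> \<exists>e\<in>E n. f \<in> res n e"
    and act_closed: "g \<in> Grp n \<Longrightarrow> e \<in> E n \<Longrightarrow> act n g e \<in> E n"
    and act_inj: "g \<in> Grp n \<Longrightarrow> inj_on (act n g) (E n)"
    and res_act: "g \<in> Grp n \<Longrightarrow> e \<in> E n \<Longrightarrow>
        \<exists>g'\<in>Grp (Suc n). res n (act n g e) = act (Suc n) g' ` res n e"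
    and reps_finite: "finite R" and reps_nonempty: "R \<noteq> {}" and reps_subset: "R \<subseteq> E 0"
    and reps_orbits: "e \<in> E 0 \<Longrightarrow> \<exists>g\<in>Grp 0. \<exists>r\<in>R. e = act 0 g r"
begin

primrec descent_count :: "nat \<Rightarrow> nat \<Rightarrow> 'e \<Rightarrow> real" where
  "descent_count 0 n e = 1"
| "descent_count (Suc k) n e = (\<Sum>x\<in>res n e. descent_count k (Suc n) x)"

lemma descent_count_pos: "e \<in> E n \<Longrightarrow> 0 < descent_count k n e"
proof (induction k arbitrary: n e)
  case (Suc k)
  then show ?case
    using res_subset[OF Suc.prems]
    by (auto intro!: sum_pos res_finite res_nonempty)
qed simp

lemma descent_count_act:
  "g \<in> Grp n \<Longrightarrow> e \<in> E n \<Longrightarrow> descent_count k n (act n g e) = descent_count k n e"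
proof (induction k arbitrary: n g e)
  case (Suc k)
  obtain g' where g': "g' \<in> Grp (Suc n)"
    and res_eq: "res n (act n g e) = act (Suc n) g' ` res n e"
    using res_act[OF Suc.prems] by blast
  have inj: "inj_on (act (Suc n) g') (res n e)"
    using act_inj[OF g'] res_subset[OF Suc.prems(2)] by (rule inj_on_subset)
  have "descent_count (Suc k) n (act n g e)
      = (\<Sum>x\<in>res n e. descent_count k (Suc n) (act (Suc n) g' x))"
    by (simp add: res_eq sum.reindex[OF inj])
  also have "\<dots> = descent_count (Suc k) n e"
    using Suc.IH[OF g'] res_subset[OF Suc.prems(2)] by (auto intro: sum.cong)
  finally show ?case .
qed simp

lemma descent_count_le_level0:
  "f \<in> E n \<Longrightarrow> \<exists>e\<in>E 0. descent_count k n f \<le> descent_count (n + k) 0 e"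
proof (induction n arbitrary: f k)
  case (Suc n)
  obtain e where e: "e \<in> E n" "f \<in> res n e" using res_cover[OF Suc.prems] by blast
  have "descent_count k (Suc n) f \<le> descent_count (Suc k) n e"
    unfolding descent_count.simps
  proof (rule member_le_sum[OF e(2) _ res_finite[OF e(1)]])
    fix x assume "x \<in> res n e - {f}"
    then show "0 \<le> descent_count k (Suc n) x"
      using res_subset[OF e(1)] by (auto intro: less_imp_le descent_count_pos)
  qed
  moreover obtain e0 where "e0 \<in> E 0" "descent_count (Suc k) n e \<le> descent_count (n + Suc k) 0 e0"
    using Suc.IH[OF e(1)] by blast
  ultimately show ?case by (metis add_Suc add_Suc_right order_trans)
qed auto

lemma descent_count_le_reps:
  assumes "f \<in> E n"
  shows "descent_count k n f \<le> (\<Sum>r\<in>R. descent_count (n + k) 0 r)"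
proof -
  obtain e where e: "e \<in> E 0" "descent_count k n f \<le> descent_count (n + k) 0 e"
    using descent_count_le_level0[OF assms] by blast
  obtain g r where g: "g \<in> Grp 0" and r: "r \<in> R" and e_eq: "e = act 0 g r"
    using reps_orbits[OF e(1)] by blast
  have "descent_count (n + k) 0 e = descent_count (n + k) 0 r"
    unfolding e_eq using r reps_subset by (intro descent_count_act[OF g]) blast
  also have "\<dots> \<le> (\<Sum>r\<in>R. descent_count (n + k) 0 r)"
  proof (rule member_le_sum[OF r _ reps_finite])
    fix x assume "x \<in> R - {r}"
    then show "0 \<le> descent_count (n + k) 0 x"
      using reps_subset by (auto intro: less_imp_le descent_count_pos)
  qed
  finally show ?thesis using e(2) by simp
qed

definition consistent_weights :: "nat \<Rightarrow> (nat \<times> 'e \<Rightarrow> real) set" where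
  "consistent_weights M = {w.
      (\<forall>n<M. \<forall>e\<in>E n. w (n, e) = (\<Sum>x\<in>res n e. w (Suc n, x)))
    \<and> (\<forall>n\<le>M. \<forall>g\<in>Grp n. \<forall>e\<in>E n. w (n, act n g e) = w (n, e))
    \<and> (\<Sum>r\<in>R. w (0, r)) = 1}"

lemma closed_consistent_weights: "closed (consistent_weights M)"
  unfolding consistent_weights_def Ball_def
  by (intro closed_Collect_conj closed_Collect_all closed_Collect_imp open_Collect_const
      closed_Collect_eq continuous_intros continuous_on_product_coordinates)

lemma consistent_weights_antimono: "m \<le> M \<Longrightarrow> consistent_weights M \<subseteq> consistent_weights m"
  unfolding consistent_weights_def by auto

lemma descent_count_reps_pos: "0 < (\<Sum>r\<in>R. descent_count M 0 r)"
  using reps_finite reps_nonempty reps_subset descent_count_pos by (auto intro!: sum_pos)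

definition descent_weight :: "nat \<Rightarrow> nat \<times> 'e \<Rightarrow> real" where
  "descent_weight M = (\<lambda>(n, e). if n \<le> M \<and> e \<in> E n
      then descent_count (M - n) n e / (\<Sum>r\<in>R. descent_count M 0 r) else 0)"

lemma descent_weight_consistent: "descent_weight M \<in> consistent_weights M"
  unfolding consistent_weights_def
proof (intro CollectI conjI allI impI ballI)
  let ?c = "\<Sum>r\<in>R. descent_count M 0 r"
  fix n e assume n: "n < M" and e: "e \<in> E n"
  have "M - n = Suc (M - Suc n)" using n by simp
  then have "descent_weight M (n, e) = (\<Sum>x\<in>res n e. descent_count (M - Suc n) (Suc n) x / ?c)"
    using n e by (simp add: descent_weight_def sum_divide_distrib)
  also have "\<dots> = (\<Sum>x\<in>res n e. descent_weight M (Suc n, x))"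
    using n res_subset[OF e] by (auto simp: descent_weight_def intro!: sum.cong)
  finally show "descent_weight M (n, e) = (\<Sum>x\<in>res n e. descent_weight M (Suc n, x))" .
next
  fix n g e assume "n \<le> M" "g \<in> Grp n" "e \<in> E n"
  then show "descent_weight M (n, act n g e) = descent_weight M (n, e)"
    by (simp add: descent_weight_def act_closed descent_count_act)
next
  have "(\<Sum>r\<in>R. descent_weight M (0, r)) = (\<Sum>r\<in>R. descent_count M 0 r / (\<Sum>r\<in>R. descent_count M 0 r))"
    using reps_subset by (auto simp: descent_weight_def intro!: sum.cong)
  also have "\<dots> = 1"
    using descent_count_reps_pos[of M] by (simp add: sum_divide_distrib[symmetric])
  finally show "(\<Sum>r\<in>R. descent_weight M (0, r)) = 1" .
qed

lemma descent_weight_unit_box: "descent_weight M \<in> UNIV \<rightarrow> {0..1}"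
proof
  fix i :: "nat \<times> 'e"
  obtain n e where i: "i = (n, e)" by fastforce
  show "descent_weight M i \<in> {0..1}"
  proof (cases "n \<le> M \<and> e \<in> E n")
    case True
    then have "descent_count (M - n) n e \<le> (\<Sum>r\<in>R. descent_count M 0 r)"
      using descent_count_le_reps[of e n "M - n"] by simp
    then show ?thesis
      using True descent_count_reps_pos[of M] descent_count_pos[of e n "M - n"]
      by (simp add: i descent_weight_def)
  next
    case False
    then show ?thesis by (auto simp: i descent_weight_def)
  qed
qed

lemma consistent_weights_limit: "\<exists>w\<in>UNIV \<rightarrow> {0..1}. \<forall>M. w \<in> consistent_weights M"
proof -
  have "(UNIV \<rightarrow> {0..1}) \<inter> (\<Inter>M\<in>UNIV. consistent_weights M) \<noteq> {}"
  proof (rule compact_imp_fip_image)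
    show "compact (UNIV \<rightarrow> {0..1::real} :: (nat \<times> 'e \<Rightarrow> real) set)"
      by (intro compact_funcset_UNIV compact_Icc)
    show "closed (consistent_weights M)" for M
      by (rule closed_consistent_weights)
    fix I :: "nat set" assume "finite I"
    then obtain M where "\<forall>i\<in>I. i \<le> M" using finite_nat_set_iff_bounded_le by blast
    then have "consistent_weights M \<subseteq> (\<Inter>i\<in>I. consistent_weights i)"
      using consistent_weights_antimono by blast
    then show "(UNIV \<rightarrow> {0..1}) \<inter> (\<Inter>i\<in>I. consistent_weights i) \<noteq> {}"
      using descent_weight_consistent[of M] descent_weight_unit_box[of M] by blast
  qed
  then show ?thesis by blast
qed

lemma consistent_weightsD:
  assumes "\<forall>M. w \<in> consistent_weights M"
  shows consistent_weight_sum: "e \<in> E n \<Longrightarrow> w (n, e) = (\<Sum>x\<in>res n e. w (Suc n, x))"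
    and consistent_weight_act: "g \<in> Grp n \<Longrightarrow> e \<in> E n \<Longrightarrow> w (n, act n g e) = w (n, e)"
    and consistent_weight_reps: "(\<Sum>r\<in>R. w (0, r)) = 1"
proof -
  have "w \<in> consistent_weights (Suc n)" using assms ..
  then show "e \<in> E n \<Longrightarrow> w (n, e) = (\<Sum>x\<in>res n e. w (Suc n, x))"
    and "g \<in> Grp n \<Longrightarrow> e \<in> E n \<Longrightarrow> w (n, act n g e) = w (n, e)"
    and "(\<Sum>r\<in>R. w (0, r)) = 1"
    unfolding consistent_weights_def by simp_all
qed

lemma consistent_weight_nonzero_at_level:
  assumes w: "\<forall>M. w \<in> consistent_weights M"
  shows "\<exists>e\<in>E m. w (m, e) \<noteq> 0"
proof (induction m)
  case 0
  show ?case
  proof (rule ccontr)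
    assume "\<not> (\<exists>e\<in>E 0. w (0, e) \<noteq> 0)"
    then have "(\<Sum>r\<in>R. w (0, r)) = 0" using reps_subset by (auto intro: sum.neutral)
    then show False using consistent_weight_reps[OF w] by simp
  qed
next
  case (Suc m)
  then obtain e where e: "e \<in> E m" "w (m, e) \<noteq> 0" by blast
  show ?case
  proof (rule ccontr)
    assume "\<not> (\<exists>e\<in>E (Suc m). w (Suc m, e) \<noteq> 0)"
    then have "(\<Sum>x\<in>res m e. w (Suc m, x)) = 0" using res_subset[OF e(1)] by (auto intro: sum.neutral)
    then show False using consistent_weight_sum[OF w e(1)] e(2) by simp
  qed
qed

definition reducible :: bool where
  "reducible \<longleftrightarrow> (\<exists>N. \<exists>Es :: nat \<Rightarrow> 'e set. \<forall>m\<ge>N.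
      Es m \<subset> E m \<and> Es m \<noteq> {}
    \<and> (\<forall>g\<in>Grp m. act m g ` Es m \<subseteq> Es m)
    \<and> (\<forall>e\<in>Es m. res m e \<subseteq> Es (Suc m)))"

lemma consistent_weight_zero_imp_reducible:
  assumes w: "\<forall>M. w \<in> consistent_weights M" and nonneg: "\<And>i. 0 \<le> w i"
    and e: "e \<in> E n" and zero: "w (n, e) = 0"
  shows reducible
proof -
  define Z where "Z m = {e \<in> E m. w (m, e) = 0}" for m
  have res_Z: "res m x \<subseteq> Z (Suc m)" if x: "x \<in> Z m" for m x
  proof -
    have xE: "x \<in> E m" and "w (m, x) = 0" using x unfolding Z_def by blast+
    moreover have "w (m, x) = (\<Sum>y\<in>res m x. w (Suc m, y))"
      by (rule consistent_weight_sum[OF w xE])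
    ultimately have "\<forall>y\<in>res m x. w (Suc m, y) = 0"
      using sum_nonneg_eq_0_iff[OF res_finite[OF xE]] nonneg by metis
    then show ?thesis using res_subset[OF xE] unfolding Z_def by blast
  qed
  have nonempty: "Z m \<noteq> {}" if "n \<le> m" for m
    using that
  proof (induction m rule: dec_induct)
    case base
    then show ?case using e zero unfolding Z_def by blast
  next
    case (step m)
    then obtain x where x: "x \<in> Z m" by blast
    then have "res m x \<noteq> {}" using res_nonempty unfolding Z_def by blast
    with res_Z[OF x] show ?case by blast
  qed
  have proper: "Z m \<subset> E m" for m
    using consistent_weight_nonzero_at_level[OF w, where m = m] unfolding Z_def by blast
  have invariant: "act m g ` Z m \<subseteq> Z m" if g: "g \<in> Grp m" for m g
    using act_closed[OF g] consistent_weight_act[OF w g] unfolding Z_def by auto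
  show reducible
    unfolding reducible_def
    by (intro exI[of _ n] exI[of _ Z] allI impI conjI ballI proper nonempty invariant res_Z)
qed

theorem irreducible_imp_positive_consistent_weights:
  assumes "\<not> reducible"
  shows "\<exists>len :: nat \<Rightarrow> 'e \<Rightarrow> real. \<forall>n. \<forall>e\<in>E n.
           len n e > 0
         \<and> (\<forall>g\<in>Grp n. len n (act n g e) = len n e)
         \<and> (\<Sum>e'\<in>res n e. len (Suc n) e') = len n e"
proof -
  obtain w where w01: "w \<in> UNIV \<rightarrow> {0..1}" and w: "\<forall>M. w \<in> consistent_weights M"
    using consistent_weights_limit by blast
  have nonneg: "0 \<le> w i" for i
    using Pi_mem[OF w01 UNIV_I, of i] by simp
  have pos: "0 < w (n, e)" if "e \<in> E n" for n e
    using consistent_weight_zero_imp_reducible[OF w nonneg that] assms nonneg[of "(n, e)"]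
    by linarith
  show ?thesis
  proof (intro exI[of _ "\<lambda>n e. w (n, e)"] allI ballI conjI)
    fix n e assume e: "e \<in> E n"
    show "0 < w (n, e)" by (rule pos[OF e])
    show "w (n, act n g e) = w (n, e)" if "g \<in> Grp n" for g
      by (rule consistent_weight_act[OF w that e])
    show "(\<Sum>e'\<in>res n e. w (Suc n, e')) = w (n, e)"
      using consistent_weight_sum[OF w e] by simp
  qed
qed

end

lemma folding_sequence_equivariant_refinement:
  assumes FS: "folding_sequence S"
    and R: "finite R" "R \<noteq> {}" "R \<subseteq> gt_E (fs_tree S 0)"
      "gt_E (fs_tree S 0) = (\<Union>r\<in>R. orbitE (fs_tree S 0) r)"
  shows "equivariant_refinement (\<lambda>n. gt_E (fs_tree S n)) (\<lambda>n. carrier (gt_grp (fs_tree S n)))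
           (\<lambda>n. gt_actE (fs_tree S n)) (results S) R"
proof
  fix n e
  assume e: "e \<in> gt_E (fs_tree S n)"
  show "finite (results S n e)" "results S n e \<noteq> {}" "results S n e \<subseteq> gt_E (fs_tree S (Suc n))"
    using results_finite_nonempty_subset[OF FS e] by blast+
  show "\<exists>g'\<in>carrier (gt_grp (fs_tree S (Suc n))).
          results S n (gt_actE (fs_tree S n) g e) = gt_actE (fs_tree S (Suc n)) g' ` results S n e"
    if "g \<in> carrier (gt_grp (fs_tree S n))" for g
    by (rule results_act[OF FS that e])
  show "gt_actE (fs_tree S n) g e \<in> gt_E (fs_tree S n)"
    if "g \<in> carrier (gt_grp (fs_tree S n))" for g
    by (rule gtree_actE_closed[OF folding_sequence_gtree[OF FS] that e])
next
  fix n f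
  assume "f \<in> gt_E (fs_tree S (Suc n))"
  then show "\<exists>e\<in>gt_E (fs_tree S n). f \<in> results S n e"
    by (rule results_cover[OF FS])
next
  fix n g
  assume "g \<in> carrier (gt_grp (fs_tree S n))"
  then show "inj_on (gt_actE (fs_tree S n) g) (gt_E (fs_tree S n))"
    by (rule bij_betw_imp_inj_on[OF gtree_bij_actE[OF folding_sequence_gtree[OF FS]]])
next
  fix e
  assume "e \<in> gt_E (fs_tree S 0)"
  then show "\<exists>g\<in>carrier (gt_grp (fs_tree S 0)). \<exists>r\<in>R. e = gt_actE (fs_tree S 0) g r"
    using R(4) unfolding orbitE_def by blast
qed (use R in auto)

theorem theorem3p1:
  fixes S :: "('g, 'v, 'e) fseq"
  assumes "folding_sequence S" and "irreducible_fseq S"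
  shows "\<exists>len :: nat \<Rightarrow> 'e \<Rightarrow> real. \<forall>n. \<forall>e\<in>gt_E (fs_tree S n).
           len n e > 0
         \<and> (\<forall>g\<in>carrier (gt_grp (fs_tree S n)). len n (gt_actE (fs_tree S n) g e) = len n e)
         \<and> (\<Sum>e'\<in>results S n e. len (Suc n) e') = len n e"
proof -
  let ?T0 = "fs_tree S 0"
  obtain R where R: "finite R" "R \<subseteq> gt_E ?T0" "gt_E ?T0 = (\<Union>r\<in>R. orbitE ?T0 r)"
    using folding_sequenceD[OF assms(1)] by (rule minimal_fin_gen_finite_edge_orbits)
  have "R \<noteq> {}"
    using R(3) folding_sequence_edges_nonempty[OF assms(1)] by auto
  interpret equivariant_refinement "\<lambda>n. gt_E (fs_tree S n)" "\<lambda>n. carrier (gt_grp (fs_tree S n))"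
      "\<lambda>n. gt_actE (fs_tree S n)" "results S" R
    using folding_sequence_equivariant_refinement[OF assms(1) R(1) \<open>R \<noteq> {}\<close> R(2,3)] .
  have "\<not> reducible"
    using assms(2) unfolding irreducible_fseq_def reducible_fseq_def reducible_def .
  then show ?thesis
    by (rule irreducible_imp_positive_consistent_weights)
qed

end
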